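(* Let $N\in\mathbb{C}^{m\times n}$ have rank $r$ and singular value decomposition $N=U\begin{pmatrix}\Sigma & 0\\ 0 & 0\end{pmatrix}V^{\ast}$, where $\Sigma\in\mathbb{C}^{r\times r}$ is diagonal with positive diagonal entries and $U\in\mathbb{C}^{m\times m}$, $V\in\mathbb{C}^{n\times n}$ are unitary. Let $X\in\mathbb{C}^{m\times m}$ and $Y\in\mathbb{C}^{n\times n}$ be nonsingular, and let $M_{1}=XN$, $M_{2}=NY$. (1) If $X=U\begin{pmatrix}X_{1} & 0\\ X_{2} & X_{4}\end{pmatrix}U^{\ast}$ for some $X_{1}\in\mathbb{C}^{r\times r}$, $X_{2}\in\mathbb{C}^{(m-r)\times r}$, $X_{4}\in\mathbb{C}^{(m-r)\times(m-r)}$, then $$M_{1}M_{1}^{\dagger}=(I+R)NN^{\dagger}(I+R^{\ast}R)^{-1}(I+R^{\ast}),$$ where $R=XE_{N}X^{-1}(E_{N}-I)$. (2) If $Y=V\begin{pmatrix}Y_{1} & Y_{3}\\ 0 & Y_{4}\end{pmatrix}V^{\ast}$ for some $Y_{1}\in\mathbb{C}^{r\times r}$, $Y_{3}\in\mathbb{C}^{r\times(n-r)}$, $Y_{4}\in\mathbb{C}^{(n-r)\times(n-r)}$, then $$M_{2}^{\dagger}M_{2}=(I+L^{\ast})(I+LL^{\ast})^{-1}N^{\dagger}N(I+L),$$ where $L=(F_{N}-I)Y^{-1}F_{N}Y$.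
   Context: For a complex matrix $A$, $A^{\ast}$ is its conjugate transpose and $A^{\dagger}$ its Moore--Penrose inverse. $E_{A}:=I-AA^{\dagger}$ and $F_{A}:=I-A^{\dagger}A$. $I$ denotes an identity matrix of the appropriate size. *)

theory Defs
  imports "Jordan_Normal_Form.Schur_Decomposition" "Jordan_Normal_Form.DL_Rank"
begin

definition unitary_mat :: "complex mat \<Rightarrow> nat \<Rightarrow> bool" where
  "unitary_mat U k \<longleftrightarrow> U \<in> carrier_mat k k \<and> U * mat_adjoint U = 1\<^sub>m k \<and> mat_adjoint U * U = 1\<^sub>m k"

definition minv :: "complex mat \<Rightarrow> complex mat" where
  "minv A = (THE B. B \<in> carrier_mat (dim_row A) (dim_row A) \<and>
                    A * B = 1\<^sub>m (dim_row A) \<and> B * A = 1\<^sub>m (dim_row A))"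

definition mp_inv :: "complex mat \<Rightarrow> complex mat" where
  "mp_inv A = (THE G. G \<in> carrier_mat (dim_col A) (dim_row A) \<and>
                  A * G * A = A \<and> G * A * G = G \<and>
                  mat_adjoint (A * G) = A * G \<and> mat_adjoint (G * A) = G * A)"

end

theory Submission
  imports Defs
begin

text \<open>
  \<open>P = N N\<^sup>\<dagger>\<close> is the orthogonal projector onto the range of \<open>N\<close>, and the block forms say
  that \<open>X\<close>, and hence \<open>X\<^sup>-\<^sup>1\<close>, leaves the range of \<open>E = I - P\<close> invariant:
  \<open>P X E = P X\<^sup>-\<^sup>1 E = 0\<close>. Then \<open>X P X\<^sup>-\<^sup>1 = (I + R) P\<close>, so \<open>X N\<close> and \<open>(I + R) P\<close> have
  the same range, and \<open>Q = (I + R) P (I + R\<^sup>* R)\<^sup>-\<^sup>1 (I + R\<^sup>*)\<close> is the orthogonal projector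
  onto it: \<open>Q\<close> is Hermitian because \<open>(I + R\<^sup>* R)\<^sup>-\<^sup>1\<close> commutes with \<open>P\<close>, and it fixes
  \<open>(I + R) P\<close> because \<open>P (I + R\<^sup>*) (I + R) P = (I + R\<^sup>* R) P\<close>. Hence \<open>N\<^sup>\<dagger> X\<^sup>-\<^sup>1 Q\<close>
  satisfies the four Penrose equations for \<open>X N\<close>, which gives (1). Part (2) is (1) for
  \<open>N\<^sup>*\<close> and \<open>Y\<^sup>*\<close>, because \<open>(N Y)\<^sup>\<dagger> (N Y)\<close> is the adjoint of \<open>(N Y)\<^sup>* ((N Y)\<^sup>*)\<^sup>\<dagger>\<close>.
\<close>

lemma mat_adjoint_dim [simp]:
  "dim_row (mat_adjoint A) = dim_col A" "dim_col (mat_adjoint A) = dim_row A"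
  unfolding mat_adjoint_def by simp_all

lemma mat_adjoint_index [simp]:
  "i < dim_col A \<Longrightarrow> j < dim_row A \<Longrightarrow> mat_adjoint A $$ (i, j) = conjugate (A $$ (j, i))"
  unfolding mat_adjoint_def by (simp add: mat_of_rows_index)

lemma carrier_mat_adjoint [simp]: "A \<in> carrier_mat m n \<Longrightarrow> mat_adjoint A \<in> carrier_mat n m"
  unfolding carrier_mat_def by simp

lemma mat_adjoint_adjoint [simp]: "mat_adjoint (mat_adjoint A) = A"
  by (rule eq_matI) auto

lemma mat_adjoint_one [simp]: "mat_adjoint (1\<^sub>m n :: complex mat) = 1\<^sub>m n"
  by (rule eq_matI) auto

lemma mat_adjoint_zero [simp]: "mat_adjoint (0\<^sub>m m n :: complex mat) = 0\<^sub>m n m"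
  by (rule eq_matI) auto

lemma mat_adjoint_mult:
  "dim_col A = dim_row B \<Longrightarrow> mat_adjoint ((A :: complex mat) * B) = mat_adjoint B * mat_adjoint A"
  by (rule eq_matI) (auto simp: scalar_prod_def cnj_sum mult.commute)

lemma mat_adjoint_add:
  "dim_row A = dim_row B \<Longrightarrow> dim_col A = dim_col B \<Longrightarrow>
   mat_adjoint ((A :: complex mat) + B) = mat_adjoint A + mat_adjoint B"
  by (rule eq_matI) auto

lemma mat_adjoint_minus:
  "dim_row A = dim_row B \<Longrightarrow> dim_col A = dim_col B \<Longrightarrow>
   mat_adjoint ((A :: complex mat) - B) = mat_adjoint A - mat_adjoint B"
  by (rule eq_matI) auto

lemma mat_adjoint_four_block_mat:
  assumes "(A :: complex mat) \<in> carrier_mat m1 n1" "B \<in> carrier_mat m1 n2"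
    "C \<in> carrier_mat m2 n1" "D \<in> carrier_mat m2 n2"
  shows "mat_adjoint (four_block_mat A B C D) =
    four_block_mat (mat_adjoint A) (mat_adjoint C) (mat_adjoint B) (mat_adjoint D)"
  using assms by (intro eq_matI) (auto simp: four_block_mat_def)

lemma assoc_mult_mat_dim:
  "dim_col A = dim_row B \<Longrightarrow> dim_col B = dim_row C \<Longrightarrow> (A :: 'a :: semiring_0 mat) * B * C = A * (B * C)"
  by (rule assoc_mult_mat[of _ _ "dim_row B" _ "dim_row C" _ "dim_col C"]) auto

lemma mult_add_distrib_mat_dim:
  "dim_col A = dim_row B \<Longrightarrow> dim_row B = dim_row C \<Longrightarrow> dim_col B = dim_col C \<Longrightarrow>
   (A :: 'a :: semiring_0 mat) * (B + C) = A * B + A * C"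
  by (rule mult_add_distrib_mat[of _ _ "dim_row B" _ "dim_col B"]) auto

lemma add_mult_distrib_mat_dim:
  "dim_row A = dim_row B \<Longrightarrow> dim_col A = dim_col B \<Longrightarrow> dim_col B = dim_row C \<Longrightarrow>
   ((A :: 'a :: semiring_0 mat) + B) * C = A * C + B * C"
  by (rule add_mult_distrib_mat[of _ "dim_row A" "dim_col A" _ _ "dim_col C"]) auto

lemma mult_minus_distrib_mat_dim:
  "dim_col A = dim_row B \<Longrightarrow> dim_row B = dim_row C \<Longrightarrow> dim_col B = dim_col C \<Longrightarrow>
   (A :: 'a :: ring mat) * (B - C) = A * B - A * C"
  by (rule mult_minus_distrib_mat[of _ _ "dim_row B" _ "dim_col B"]) auto

lemma minus_mult_distrib_mat_dim:
  "dim_row A = dim_row B \<Longrightarrow> dim_col A = dim_col B \<Longrightarrow> dim_col B = dim_row C \<Longrightarrow>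
   ((A :: 'a :: ring mat) - B) * C = A * C - B * C"
  by (rule minus_mult_distrib_mat[of _ "dim_row A" "dim_col A" _ _ "dim_col C"]) auto

lemma uminus_zero_mat [simp]: "- 0\<^sub>m n k = (0\<^sub>m n k :: 'a :: group_add mat)"
  by (intro eq_matI) auto

lemma invertible_mat_if_det_nonzero:
  assumes A: "(A :: 'a :: field mat) \<in> carrier_mat n n" and "det A \<noteq> 0"
  shows "invertible_mat A"
proof -
  obtain B where B: "B \<in> carrier_mat n n" "B * A = 1\<^sub>m n" "A * B = 1\<^sub>m n"
    using det_non_zero_imp_unit[OF assms, of "()"] unfolding Units_def ring_mat_def by auto
  moreover have "dim_row A = n" "dim_col A = n" "dim_row B = n" using A B(1) by auto
  ultimately show ?thesis
    unfolding invertible_mat_def inverts_mat_def square_mat.simps by metis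
qed

lemma minv_eqI:
  assumes A: "A \<in> carrier_mat n n" and B: "B \<in> carrier_mat n n" and AB: "A * B = 1\<^sub>m n"
  shows "minv A = B"
  unfolding minv_def carrier_matD(1)[OF A]
proof (rule the_equality)
  show "B \<in> carrier_mat n n \<and> A * B = 1\<^sub>m n \<and> B * A = 1\<^sub>m n"
    using B AB mat_mult_left_right_inverse[OF A B AB] by simp
next
  fix C assume C: "C \<in> carrier_mat n n \<and> A * C = 1\<^sub>m n \<and> C * A = 1\<^sub>m n"
  then have "C = C * (A * B)" using AB by auto
  also have "\<dots> = (C * A) * B" using A B C by (intro assoc_mult_mat[symmetric]) auto
  finally show "C = B" using C B by simp
qed

lemma minv_inverse:
  assumes A: "A \<in> carrier_mat n n" and "invertible_mat A"
  shows "minv A \<in> carrier_mat n n" "A * minv A = 1\<^sub>m n" "minv A * A = 1\<^sub>m n"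
proof -
  obtain B where AB: "A * B = 1\<^sub>m n" and BA: "B * A = 1\<^sub>m (dim_row B)"
    using assms unfolding invertible_mat_def inverts_mat_def by (auto dest: carrier_matD)
  have "dim_col B = n" "dim_row B = n"
    using arg_cong[OF AB, of dim_col] arg_cong[OF BA, of dim_col] A by auto
  then have B: "B \<in> carrier_mat n n" by auto
  show "minv A \<in> carrier_mat n n" "A * minv A = 1\<^sub>m n" "minv A * A = 1\<^sub>m n"
    using minv_eqI[OF A B AB] B AB mat_mult_left_right_inverse[OF A B AB] by simp_all
qed

lemma cscalar_prod_adjoint_mult:
  assumes A: "(A :: complex mat) \<in> carrier_mat m k" and v: "v \<in> carrier_vec k" and w: "w \<in> carrier_vec m"
  shows "v \<bullet>c (mat_adjoint A *\<^sub>v w) = (A *\<^sub>v v) \<bullet>c w"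
proof -
  have "v \<bullet>c (mat_adjoint A *\<^sub>v w) = (\<Sum>i<k. v $ i * (\<Sum>j<m. A $$ (j,i) * cnj (w $ j)))"
    using A v w by (simp add: scalar_prod_def mult_mat_vec_def cnj_sum lessThan_atLeast0 row_def col_def)
  also have "\<dots> = (\<Sum>i<k. \<Sum>j<m. A $$ (j,i) * v $ i * cnj (w $ j))"
    by (simp add: sum_distrib_left mult_ac)
  also have "\<dots> = (\<Sum>j<m. \<Sum>i<k. A $$ (j,i) * v $ i * cnj (w $ j))"
    by (rule sum.swap)
  also have "\<dots> = (A *\<^sub>v v) \<bullet>c w"
    using A v w by (simp add: scalar_prod_def mult_mat_vec_def lessThan_atLeast0 row_def sum_distrib_right)
  finally show ?thesis .
qed

lemma invertible_one_plus_adjoint_mult: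
  assumes A: "(A :: complex mat) \<in> carrier_mat m k"
  shows "invertible_mat (1\<^sub>m k + mat_adjoint A * A)"
proof (rule invertible_mat_if_det_nonzero)
  show T: "1\<^sub>m k + mat_adjoint A * A \<in> carrier_mat k k" using A by auto
  show "det (1\<^sub>m k + mat_adjoint A * A) \<noteq> 0"
  proof
    assume "det (1\<^sub>m k + mat_adjoint A * A) = 0"
    then obtain v where v: "v \<in> carrier_vec k" "v \<noteq> 0\<^sub>v k" and Tv: "(1\<^sub>m k + mat_adjoint A * A) *\<^sub>v v = 0\<^sub>v k"
      using det_0_iff_vec_prod_zero[OF T] by auto
    have Av: "A *\<^sub>v v \<in> carrier_vec m" using A v by auto
    have "(1\<^sub>m k + mat_adjoint A * A) *\<^sub>v v = 1\<^sub>m k *\<^sub>v v + (mat_adjoint A * A) *\<^sub>v v"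
      by (rule add_mult_distrib_mat_vec[of _ k k]) (use A v in auto)
    also have "\<dots> = v + mat_adjoint A *\<^sub>v (A *\<^sub>v v)"
      using A v by (simp add: assoc_mult_mat_vec[of _ k m _ k])
    finally have eq0: "v + mat_adjoint A *\<^sub>v (A *\<^sub>v v) = 0\<^sub>v k" using Tv by simp
    have "v \<bullet>c (v + mat_adjoint A *\<^sub>v (A *\<^sub>v v)) = 0" unfolding eq0 using v by simp
    moreover have "v \<bullet>c (v + mat_adjoint A *\<^sub>v (A *\<^sub>v v)) = v \<bullet>c v + v \<bullet>c (mat_adjoint A *\<^sub>v (A *\<^sub>v v))"
    proof -
      have w: "mat_adjoint A *\<^sub>v (A *\<^sub>v v) \<in> carrier_vec k"
        by (rule mult_mat_vec_carrier[of _ k m]) (use A Av in auto)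
      show ?thesis unfolding conjugate_add_vec[OF v(1) w]
        by (rule scalar_prod_add_distrib[of _ k]) (use v w in auto)
    qed
    ultimately have "v \<bullet>c v + (A *\<^sub>v v) \<bullet>c (A *\<^sub>v v) = 0"
      unfolding cscalar_prod_adjoint_mult[OF A v(1) Av] by simp
    moreover have "v \<bullet>c v \<ge> 0" "(A *\<^sub>v v) \<bullet>c (A *\<^sub>v v) \<ge> 0" by auto
    ultimately have "v \<bullet>c v = 0" by (simp add: add_nonneg_eq_0_iff)
    thus False using v by simp
  qed
qed

definition penrose_inverse :: "complex mat \<Rightarrow> complex mat \<Rightarrow> bool" where
  "penrose_inverse A G \<longleftrightarrow> G \<in> carrier_mat (dim_col A) (dim_row A) \<and>
     A * G * A = A \<and> G * A * G = G \<and> mat_adjoint (A * G) = A * G \<and> mat_adjoint (G * A) = G * A"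

lemma penrose_inverse_unique:
  assumes G1: "penrose_inverse A G1" and G2: "penrose_inverse A G2"
  shows "G1 = G2"
proof -
  have d: "dim_row G1 = dim_col A" "dim_col G1 = dim_row A" "dim_row G2 = dim_col A" "dim_col G2 = dim_row A"
    using G1 G2 unfolding penrose_inverse_def by auto
  from G1 have e1: "A * G1 * A = A" "G1 * A * G1 = G1" "mat_adjoint (A * G1) = A * G1" "mat_adjoint (G1 * A) = G1 * A"
    unfolding penrose_inverse_def by auto
  from G2 have e2: "A * G2 * A = A" "G2 * A * G2 = G2" "mat_adjoint (A * G2) = A * G2" "mat_adjoint (G2 * A) = G2 * A"
    unfolding penrose_inverse_def by auto
  have i: "G1 = G1 * (mat_adjoint G1 * mat_adjoint A)"
  proof -
    have "G1 = G1 * mat_adjoint (A * G1)" using e1(2,3) d by (simp add: assoc_mult_mat_dim)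
    then show ?thesis using d by (simp add: mat_adjoint_mult)
  qed
  have ii: "mat_adjoint A = mat_adjoint A * (A * G2)"
  proof -
    have "mat_adjoint A = mat_adjoint (A * G2 * A)" using e2(1) by simp
    then show ?thesis using e2(3) d by (simp add: mat_adjoint_mult)
  qed
  have iii: "G2 = mat_adjoint A * (mat_adjoint G2 * G2)"
  proof -
    have "G2 = mat_adjoint (G2 * A) * G2" using e2(2,4) d by simp
    then show ?thesis using d by (simp add: mat_adjoint_mult assoc_mult_mat_dim)
  qed
  have iv: "mat_adjoint A = G1 * (A * mat_adjoint A)"
  proof -
    have "mat_adjoint A = mat_adjoint (A * (G1 * A))" using e1(1) d by (simp add: assoc_mult_mat_dim)
    then show ?thesis using e1(4) d by (simp add: mat_adjoint_mult assoc_mult_mat_dim)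
  qed
  have "G1 = G1 * (mat_adjoint G1 * (mat_adjoint A * (A * G2)))"
    using i ii by simp
  also have "\<dots> = (G1 * (mat_adjoint G1 * mat_adjoint A)) * (A * G2)"
    using d by (simp add: assoc_mult_mat_dim)
  also have "\<dots> = G1 * (A * G2)"
    by (simp only: i[symmetric])
  also have "\<dots> = (G1 * (A * mat_adjoint A)) * (mat_adjoint G2 * G2)"
    using d by (subst iii) (simp add: assoc_mult_mat_dim)
  also have "\<dots> = G2"
    using iii iv by simp
  finally show ?thesis .
qed

lemma mp_inv_eqI: "penrose_inverse A G \<Longrightarrow> mp_inv A = G"
  unfolding mp_inv_def penrose_inverse_def[symmetric]
  using penrose_inverse_unique by blast

lemma penrose_inverse_adjoint:
  assumes "penrose_inverse A G"
  shows "penrose_inverse (mat_adjoint A) (mat_adjoint G)"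
proof -
  have d: "dim_row G = dim_col A" "dim_col G = dim_row A"
    using assms unfolding penrose_inverse_def by auto
  have "mat_adjoint A * mat_adjoint G = mat_adjoint (G * A)"
    "mat_adjoint G * mat_adjoint A = mat_adjoint (A * G)"
    "mat_adjoint A * mat_adjoint G * mat_adjoint A = mat_adjoint (A * G * A)"
    "mat_adjoint G * mat_adjoint A * mat_adjoint G = mat_adjoint (G * A * G)"
    using d by (simp_all add: mat_adjoint_mult assoc_mult_mat_dim)
  then show ?thesis
    using assms unfolding penrose_inverse_def by auto
qed

lemma penrose_inverse_mult_left:
  assumes G: "penrose_inverse A G" and A: "A \<in> carrier_mat m n"
    and X: "X \<in> carrier_mat m m" "Xi \<in> carrier_mat m m" "Xi * X = 1\<^sub>m m"
    and Q: "Q \<in> carrier_mat m m" "mat_adjoint Q = Q" "Q * (X * A) = X * A" "X * A * G * Xi * Q = Q"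
  shows "penrose_inverse (X * A) (G * Xi * Q)"
proof -
  have d: "dim_row A = m" "dim_col A = n" "dim_row G = n" "dim_col G = m"
    "dim_row X = m" "dim_col X = m" "dim_row Xi = m" "dim_col Xi = m" "dim_row Q = m" "dim_col Q = m"
    using G A X Q(1) unfolding penrose_inverse_def by auto
  have MG: "X * A * (G * Xi * Q) = Q"
    using Q(4) d by (simp add: assoc_mult_mat_dim)
  have GM: "G * Xi * Q * (X * A) = G * A"
  proof -
    have "G * Xi * Q * (X * A) = G * ((Xi * X) * A)"
      using Q(3) d by (simp add: assoc_mult_mat_dim)
    then show ?thesis using X(3) d by simp
  qed
  have "X * A * (G * Xi * Q) * (X * A) = X * A"
    "G * Xi * Q * (X * A) * (G * Xi * Q) = G * Xi * Q"
    "mat_adjoint (X * A * (G * Xi * Q)) = X * A * (G * Xi * Q)"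
    "mat_adjoint (G * Xi * Q * (X * A)) = G * Xi * Q * (X * A)"
  proof -
    show "X * A * (G * Xi * Q) * (X * A) = X * A"
      unfolding MG by (rule Q(3))
    have "G * A * (G * Xi * Q) = (G * A * G) * Xi * Q"
      using d by (simp add: assoc_mult_mat_dim)
    then show "G * Xi * Q * (X * A) * (G * Xi * Q) = G * Xi * Q"
      unfolding GM using G unfolding penrose_inverse_def by simp
    show "mat_adjoint (X * A * (G * Xi * Q)) = X * A * (G * Xi * Q)"
      unfolding MG by (rule Q(2))
    show "mat_adjoint (G * Xi * Q * (X * A)) = G * Xi * Q * (X * A)"
      unfolding GM using G unfolding penrose_inverse_def by simp
  qed
  moreover have "G * Xi * Q \<in> carrier_mat (dim_col (X * A)) (dim_row (X * A))"
    using d by (intro carrier_matI) simp_all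
  ultimately show ?thesis
    unfolding penrose_inverse_def by blast
qed

locale triangular_wrt_projector =
  fixes m :: nat and P X Xi :: "complex mat"
  assumes P_carrier: "P \<in> carrier_mat m m" and P_idem: "P * P = P"
    and P_hermitian: "mat_adjoint P = P"
    and X_carrier: "X \<in> carrier_mat m m" and Xi_carrier: "Xi \<in> carrier_mat m m"
    and X_Xi: "X * Xi = 1\<^sub>m m" and Xi_X: "Xi * X = 1\<^sub>m m"
    and X_triangular: "P * X * (1\<^sub>m m - P) = 0\<^sub>m m m"
    and Xi_triangular: "P * Xi * (1\<^sub>m m - P) = 0\<^sub>m m m"
begin

definition R :: "complex mat" where
  "R = X * (1\<^sub>m m - P) * Xi * ((1\<^sub>m m - P) - 1\<^sub>m m)"

definition T :: "complex mat" where
  "T = 1\<^sub>m m + mat_adjoint R * R"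

definition S :: "complex mat" where
  "S = minv T"

definition Q :: "complex mat" where
  "Q = (1\<^sub>m m + R) * P * S * (1\<^sub>m m + mat_adjoint R)"

lemma R_eq: "R = - (X * ((1\<^sub>m m - P) * (Xi * P)))"
proof -
  have "(1\<^sub>m m - P) - 1\<^sub>m m = - P"
    using P_carrier by (intro eq_matI) auto
  then show ?thesis
    unfolding R_def using P_carrier X_carrier Xi_carrier by (simp add: assoc_mult_mat_dim)
qed

lemma P_plus_complement: "P + (1\<^sub>m m - P) = 1\<^sub>m m"
  using P_carrier by (intro eq_matI) auto

lemma complement_complement: "1\<^sub>m m - (1\<^sub>m m - P) = P"
  using P_carrier by (intro eq_matI) auto

lemma dim_simps [simp]:
  "dim_row P = m" "dim_col P = m" "dim_row X = m" "dim_col X = m"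
  "dim_row Xi = m" "dim_col Xi = m" "dim_row R = m" "dim_col R = m"
  using P_carrier X_carrier Xi_carrier by (auto simp: R_eq)

lemma R_carrier: "R \<in> carrier_mat m m"
  by (rule carrier_matI) simp_all

lemma P_mult_R: "P * R = 0\<^sub>m m m"
proof -
  have "P * (X * ((1\<^sub>m m - P) * (Xi * P))) = (P * X * (1\<^sub>m m - P)) * (Xi * P)"
    by (simp add: assoc_mult_mat_dim)
  then show ?thesis
    unfolding R_eq X_triangular by simp
qed

lemma R_mult_P: "R * P = R"
proof -
  have "X * ((1\<^sub>m m - P) * (Xi * P)) * P = X * ((1\<^sub>m m - P) * (Xi * (P * P)))"
    by (simp add: assoc_mult_mat_dim)
  then show ?thesis
    unfolding R_eq P_idem by simp
qed

lemma adjoint_R_mult_P: "mat_adjoint R * P = 0\<^sub>m m m"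
  using arg_cong[OF P_mult_R, of mat_adjoint] by (simp add: mat_adjoint_mult P_hermitian)

lemma P_mult_adjoint_R: "P * mat_adjoint R = mat_adjoint R"
  using arg_cong[OF R_mult_P, of mat_adjoint] by (simp add: mat_adjoint_mult P_hermitian)

lemma X_P_Xi: "X * P * Xi = (1\<^sub>m m + R) * P"
proof -
  have "X * P * Xi = X * (P * Xi) * (P + (1\<^sub>m m - P))"
    unfolding P_plus_complement using X_carrier Xi_carrier P_carrier by (simp add: assoc_mult_mat_dim)
  also have "\<dots> = X * (P * Xi * P) + X * (P * Xi * (1\<^sub>m m - P))"
    by (simp add: mult_add_distrib_mat_dim assoc_mult_mat_dim)
  also have "X * (P * Xi * (1\<^sub>m m - P)) = 0\<^sub>m m m"
    unfolding Xi_triangular by simp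
  also have "X * (P * Xi * P) = X * ((1\<^sub>m m - (1\<^sub>m m - P)) * (Xi * P))"
    by (simp add: assoc_mult_mat_dim complement_complement)
  also have "\<dots> = X * Xi * P - X * ((1\<^sub>m m - P) * (Xi * P))"
    by (simp add: minus_mult_distrib_mat_dim mult_minus_distrib_mat_dim assoc_mult_mat_dim)
  also have "\<dots> = P + R"
    unfolding X_Xi R_eq by (intro eq_matI) auto
  finally have "X * P * Xi = P + R + 0\<^sub>m m m" .
  also have "\<dots> = 1\<^sub>m m * P + R * P"
    using P_carrier R_carrier by (simp add: R_mult_P)
  also have "\<dots> = (1\<^sub>m m + R) * P"
    by (simp add: add_mult_distrib_mat_dim)
  finally show ?thesis .
qed

lemma T_carrier: "T \<in> carrier_mat m m"
  unfolding T_def by (intro carrier_matI) simp_all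

lemma T_dims [simp]: "dim_row T = m" "dim_col T = m"
  using T_carrier by auto

lemma T_hermitian: "mat_adjoint T = T"
  unfolding T_def by (simp add: mat_adjoint_add mat_adjoint_mult)

lemma S_inverse: "S \<in> carrier_mat m m" "T * S = 1\<^sub>m m" "S * T = 1\<^sub>m m"
  unfolding S_def T_def
  using minv_inverse[OF T_carrier[unfolded T_def] invertible_one_plus_adjoint_mult[OF R_carrier]]
  by simp_all

lemma S_dims [simp]: "dim_row S = m" "dim_col S = m"
  using S_inverse(1) by auto

lemma S_hermitian: "mat_adjoint S = S"
proof -
  have "T * mat_adjoint S = mat_adjoint (S * T)"
    using T_carrier by (simp add: mat_adjoint_mult T_hermitian)
  then have "minv T = mat_adjoint S"
    using T_carrier S_inverse by (intro minv_eqI) auto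
  then show ?thesis
    unfolding S_def by simp
qed

lemma T_mult_P: "T * P = P + mat_adjoint R * R"
  unfolding T_def using P_carrier
  by (simp add: add_mult_distrib_mat_dim assoc_mult_mat_dim R_mult_P)

lemma P_mult_T: "P * T = P + mat_adjoint R * R"
proof -
  have "P * T = P + P * (mat_adjoint R * R)"
    unfolding T_def using P_carrier by (simp add: mult_add_distrib_mat_dim)
  also have "P * (mat_adjoint R * R) = mat_adjoint R * R"
    by (simp add: P_mult_adjoint_R flip: assoc_mult_mat_dim)
  finally show ?thesis .
qed

lemma S_P_commute: "S * P = P * S"
proof -
  have "S * P = S * (P * (T * S))"
    using S_inverse(2) P_carrier by simp
  also have "\<dots> = S * ((P * T) * S)"
    by (simp add: assoc_mult_mat_dim)
  also have "\<dots> = (S * T) * (P * S)"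
    unfolding P_mult_T T_mult_P[symmetric] by (simp add: assoc_mult_mat_dim)
  finally show ?thesis
    using S_inverse(3) P_carrier S_inverse(1) by simp
qed

lemma Q_dims [simp]: "dim_row Q = m" "dim_col Q = m"
  unfolding Q_def by simp_all

lemma Q_alt: "Q = (1\<^sub>m m + R) * S * P * (1\<^sub>m m + mat_adjoint R)"
proof -
  have "Q = (1\<^sub>m m + R) * ((P * S) * (1\<^sub>m m + mat_adjoint R))"
    unfolding Q_def by (simp add: assoc_mult_mat_dim)
  then show ?thesis
    unfolding S_P_commute[symmetric] by (simp add: assoc_mult_mat_dim)
qed

lemma Q_hermitian: "mat_adjoint Q = Q"
proof -
  have "mat_adjoint Q = mat_adjoint (1\<^sub>m m + mat_adjoint R) * (mat_adjoint S *
      (mat_adjoint P * mat_adjoint (1\<^sub>m m + R)))"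
    unfolding Q_def by (simp add: mat_adjoint_mult assoc_mult_mat_dim)
  also have "\<dots> = (1\<^sub>m m + R) * S * P * (1\<^sub>m m + mat_adjoint R)"
    by (simp add: mat_adjoint_add S_hermitian P_hermitian assoc_mult_mat_dim)
  finally show ?thesis
    unfolding Q_alt .
qed

lemma one_plus_R_mult_P: "(1\<^sub>m m + R) * P = P + R"
  using P_carrier by (simp add: add_mult_distrib_mat_dim R_mult_P)

lemma gram_one_plus_R_P: "P * ((1\<^sub>m m + mat_adjoint R) * ((1\<^sub>m m + R) * P)) = T * P"
proof -
  have "(1\<^sub>m m + mat_adjoint R) * (P + R) = P + mat_adjoint R * P + (R + mat_adjoint R * R)"
    using P_carrier R_carrier by (simp add: mult_add_distrib_mat_dim add_mult_distrib_mat_dim)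
  also have "\<dots> = P + R + mat_adjoint R * R"
    unfolding adjoint_R_mult_P using P_carrier R_carrier by (intro eq_matI) auto
  finally have "P * ((1\<^sub>m m + mat_adjoint R) * ((1\<^sub>m m + R) * P)) =
      P * P + P * R + P * (mat_adjoint R * R)"
    unfolding one_plus_R_mult_P by (simp add: mult_add_distrib_mat_dim)
  also have "\<dots> = T * P"
    unfolding P_idem P_mult_R T_mult_P using P_carrier
    by (simp add: P_mult_adjoint_R flip: assoc_mult_mat_dim)
  finally show ?thesis .
qed

lemma Q_mult_one_plus_R_P: "Q * ((1\<^sub>m m + R) * P) = (1\<^sub>m m + R) * P"
proof -
  have "Q * ((1\<^sub>m m + R) * P) =
      (1\<^sub>m m + R) * (S * (P * ((1\<^sub>m m + mat_adjoint R) * ((1\<^sub>m m + R) * P))))"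
    unfolding Q_alt by (simp add: assoc_mult_mat_dim)
  also have "\<dots> = (1\<^sub>m m + R) * ((S * T) * P)"
    unfolding gram_one_plus_R_P by (simp add: assoc_mult_mat_dim)
  finally show ?thesis
    unfolding S_inverse(3) using P_carrier by simp
qed

lemma Q_mult_X_P: "Q * (X * P) = X * P"
proof -
  have X_P: "X * P = (1\<^sub>m m + R) * P * (X * P)"
  proof -
    have "X * P = X * (P * ((Xi * X) * P))"
      using Xi_X P_carrier P_idem X_carrier by (simp add: assoc_mult_mat_dim)
    then show ?thesis
      unfolding X_P_Xi[symmetric] by (simp add: assoc_mult_mat_dim)
  qed
  have "Q * (X * P) = Q * ((1\<^sub>m m + R) * P) * (X * P)"
    by (subst X_P) (simp add: assoc_mult_mat_dim)
  then show ?thesis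
    unfolding Q_mult_one_plus_R_P X_P[symmetric] .
qed

lemma X_P_Xi_mult_Q: "X * P * Xi * Q = Q"
proof -
  have P_one_plus_R_P: "P * ((1\<^sub>m m + R) * P) = P"
    unfolding one_plus_R_mult_P using P_carrier R_carrier
    by (simp add: mult_add_distrib_mat_dim P_idem P_mult_R)
  have "X * P * Xi * Q = (1\<^sub>m m + R) * ((P * ((1\<^sub>m m + R) * P)) * (S * (1\<^sub>m m + mat_adjoint R)))"
    unfolding X_P_Xi Q_def by (simp add: assoc_mult_mat_dim)
  then show ?thesis
    unfolding P_one_plus_R_P Q_def by (simp add: assoc_mult_mat_dim)
qed

lemma penrose_inverse_mult_left_projector:
  assumes G: "penrose_inverse A G" and A: "A \<in> carrier_mat m n" and AG: "A * G = P"
  shows "penrose_inverse (X * A) (G * Xi * Q)" "X * A * (G * Xi * Q) = Q"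
proof -
  have dA: "dim_row A = m" "dim_col A = n" and dG: "dim_row G = n" "dim_col G = m"
    using G A unfolding penrose_inverse_def by auto
  have "X * P * A = X * (A * G * A)"
    unfolding AG[symmetric] using dA dG by (simp add: assoc_mult_mat_dim)
  then have X_A: "X * A = X * P * A"
    using G unfolding penrose_inverse_def by simp
  have "Q * (X * P * A) = Q * (X * P) * A"
    using dA by (simp add: assoc_mult_mat_dim)
  then have Q_X_A: "Q * (X * A) = X * A"
    unfolding X_A[symmetric] Q_mult_X_P X_A[symmetric] .
  have "X * A * G * Xi * Q = X * P * Xi * Q"
    unfolding AG[symmetric] using dA dG by (simp add: assoc_mult_mat_dim)
  then have X_A_G_Xi_Q: "X * A * G * Xi * Q = Q"
    unfolding X_P_Xi_mult_Q .
  have Q_carrier: "Q \<in> carrier_mat m m"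
    by (intro carrier_matI) simp_all
  show "penrose_inverse (X * A) (G * Xi * Q)"
    by (rule penrose_inverse_mult_left[OF G A X_carrier Xi_carrier Xi_X Q_carrier Q_hermitian
          Q_X_A X_A_G_Xi_Q])
  show "X * A * (G * Xi * Q) = Q"
    using dA dG X_A_G_Xi_Q by (simp add: assoc_mult_mat_dim)
qed

end

lemma mult_four_block_mat_corner:
  assumes "(A :: 'a :: semiring_0 mat) \<in> carrier_mat r s" "B \<in> carrier_mat s t"
  shows "four_block_mat A (0\<^sub>m r l) (0\<^sub>m k s) (0\<^sub>m k l) * four_block_mat B (0\<^sub>m s p) (0\<^sub>m l t) (0\<^sub>m l p)
    = four_block_mat (A * B) (0\<^sub>m r p) (0\<^sub>m k t) (0\<^sub>m k p)"
  using assms by (subst mult_four_block_mat[of _ r s _ l _ k]) auto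

lemma unitary_matD:
  assumes "unitary_mat U m"
  shows "U \<in> carrier_mat m m" "U * mat_adjoint U = 1\<^sub>m m" "mat_adjoint U * U = 1\<^sub>m m"
    "dim_row Z = m \<Longrightarrow> mat_adjoint U * (U * Z) = Z" "dim_row Z = m \<Longrightarrow> U * (mat_adjoint U * Z) = Z"
  using assms unfolding unitary_mat_def by (auto simp flip: assoc_mult_mat_dim)

lemma penrose_inverse_svd:
  fixes U V S Si :: "complex mat"
  assumes U: "unitary_mat U m" and V: "unitary_mat V n" and r: "r \<le> m" "r \<le> n"
    and S: "S \<in> carrier_mat r r" "Si \<in> carrier_mat r r" "S * Si = 1\<^sub>m r" "Si * S = 1\<^sub>m r"
  defines "N \<equiv> U * four_block_mat S (0\<^sub>m r (n - r)) (0\<^sub>m (m - r) r) (0\<^sub>m (m - r) (n - r)) * mat_adjoint V"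
    and "G \<equiv> V * four_block_mat Si (0\<^sub>m r (m - r)) (0\<^sub>m (n - r) r) (0\<^sub>m (n - r) (m - r)) * mat_adjoint U"
  shows "penrose_inverse N G"
    "N * G = U * four_block_mat (1\<^sub>m r) (0\<^sub>m r (m - r)) (0\<^sub>m (m - r) r) (0\<^sub>m (m - r) (m - r)) * mat_adjoint U"
    "G * N = V * four_block_mat (1\<^sub>m r) (0\<^sub>m r (n - r)) (0\<^sub>m (n - r) r) (0\<^sub>m (n - r) (n - r)) * mat_adjoint V"
proof -
  define D where "D = four_block_mat S (0\<^sub>m r (n - r)) (0\<^sub>m (m - r) r) (0\<^sub>m (m - r) (n - r))"
  define Di where "Di = four_block_mat Si (0\<^sub>m r (m - r)) (0\<^sub>m (n - r) r) (0\<^sub>m (n - r) (m - r))"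
  define Pm where "Pm = four_block_mat (1\<^sub>m r) (0\<^sub>m r (m - r)) (0\<^sub>m (m - r) r) (0\<^sub>m (m - r) (m - r) :: complex mat)"
  define Pn where "Pn = four_block_mat (1\<^sub>m r) (0\<^sub>m r (n - r)) (0\<^sub>m (n - r) r) (0\<^sub>m (n - r) (n - r) :: complex mat)"
  note u = unitary_matD[OF U] and v = unitary_matD[OF V]
  have d: "dim_row U = m" "dim_col U = m" "dim_row V = n" "dim_col V = n"
    "dim_row D = m" "dim_col D = n" "dim_row Di = n" "dim_col Di = m"
    "dim_row Pm = m" "dim_col Pm = m" "dim_row Pn = n" "dim_col Pn = n"
    using u(1) v(1) S r unfolding D_def Di_def Pm_def Pn_def by auto
  have D_Di: "D * Di = Pm" and Di_D: "Di * D = Pn" and Pm_D: "Pm * D = D" and Pn_Di: "Pn * Di = Di"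
    unfolding D_def Di_def Pm_def Pn_def using S
    by (simp_all add: mult_four_block_mat_corner[of _ r r])
  have Pm_hermitian: "mat_adjoint Pm = Pm"
    unfolding Pm_def by (subst mat_adjoint_four_block_mat) auto
  have Pn_hermitian: "mat_adjoint Pn = Pn"
    unfolding Pn_def by (subst mat_adjoint_four_block_mat) auto
  have N_G: "N * G = U * Pm * mat_adjoint U"
    unfolding N_def G_def D_def[symmetric] Di_def[symmetric] D_Di[symmetric]
    using d v(4) by (simp add: assoc_mult_mat_dim)
  have G_N: "G * N = V * Pn * mat_adjoint V"
    unfolding N_def G_def D_def[symmetric] Di_def[symmetric] Di_D[symmetric]
    using d u(4) by (simp add: assoc_mult_mat_dim)
  have N: "N = U * D * mat_adjoint V" and G: "G = V * Di * mat_adjoint U"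
    unfolding N_def G_def D_def Di_def by simp_all
  have "N * G * N = U * (Pm * D) * mat_adjoint V"
    unfolding N_G by (subst N) (use d u(4) in \<open>simp add: assoc_mult_mat_dim\<close>)
  moreover have "G * N * G = V * (Pn * Di) * mat_adjoint U"
    unfolding G_N by (subst G) (use d v(4) in \<open>simp add: assoc_mult_mat_dim\<close>)
  ultimately have "N * G * N = N" "G * N * G = G"
    unfolding Pm_D Pn_Di N[symmetric] G[symmetric] by simp_all
  moreover have "mat_adjoint (N * G) = N * G" "mat_adjoint (G * N) = G * N"
    unfolding N_G G_N using d Pm_hermitian Pn_hermitian by (simp_all add: mat_adjoint_mult assoc_mult_mat_dim)
  moreover have "G \<in> carrier_mat (dim_col N) (dim_row N)"
    unfolding N_def G_def D_def[symmetric] Di_def[symmetric] using d by (intro carrier_matI) simp_all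
  ultimately show "penrose_inverse N G"
    unfolding penrose_inverse_def by blast
  show "N * G = U * four_block_mat (1\<^sub>m r) (0\<^sub>m r (m - r)) (0\<^sub>m (m - r) r) (0\<^sub>m (m - r) (m - r)) * mat_adjoint U"
    unfolding N_G Pm_def ..
  show "G * N = V * four_block_mat (1\<^sub>m r) (0\<^sub>m r (n - r)) (0\<^sub>m (n - r) r) (0\<^sub>m (n - r) (n - r)) * mat_adjoint V"
    unfolding G_N Pn_def ..
qed

lemma four_block_mat_inject:
  assumes "A \<in> carrier_mat r1 c1" "B \<in> carrier_mat r1 c2" "C \<in> carrier_mat r2 c1" "D \<in> carrier_mat r2 c2"
    "A' \<in> carrier_mat r1 c1" "B' \<in> carrier_mat r1 c2" "C' \<in> carrier_mat r2 c1" "D' \<in> carrier_mat r2 c2"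
    and eq: "four_block_mat A B C D = four_block_mat A' B' C' D'"
  shows "A = A'" "B = B'" "C = C'" "D = D'"
proof -
  have e: "four_block_mat A B C D $$ (i, j) = four_block_mat A' B' C' D' $$ (i, j)" for i j
    using eq by simp
  show "A = A'"
  proof (rule eq_matI)
    fix i j assume "i < dim_row A'" "j < dim_col A'"
    then show "A $$ (i, j) = A' $$ (i, j)" using assms(1-8) e[of i j] by simp
  qed (use assms(1-8) in auto)
  show "B = B'"
  proof (rule eq_matI)
    fix i j assume "i < dim_row B'" "j < dim_col B'"
    then show "B $$ (i, j) = B' $$ (i, j)" using assms(1-8) e[of i "j + c1"] by simp
  qed (use assms(1-8) in auto)
  show "C = C'"
  proof (rule eq_matI)
    fix i j assume "i < dim_row C'" "j < dim_col C'"
    then show "C $$ (i, j) = C' $$ (i, j)" using assms(1-8) e[of "i + r1" j] by simp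
  qed (use assms(1-8) in auto)
  show "D = D'"
  proof (rule eq_matI)
    fix i j assume "i < dim_row D'" "j < dim_col D'"
    then show "D $$ (i, j) = D' $$ (i, j)" using assms(1-8) e[of "i + r1" "j + c1"] by simp
  qed (use assms(1-8) in auto)
qed

lemma lower_block_triangular_right_inverse:
  fixes X1 :: "'a :: field mat"
  assumes X: "X1 \<in> carrier_mat r r" "X2 \<in> carrier_mat k r" "X4 \<in> carrier_mat k k"
    and Z: "Z \<in> carrier_mat (r + k) (r + k)"
    and inv: "four_block_mat X1 (0\<^sub>m r k) X2 X4 * Z = 1\<^sub>m (r + k)"
  obtains Z1 Z3 Z4 where "Z1 \<in> carrier_mat r r" "Z3 \<in> carrier_mat k r" "Z4 \<in> carrier_mat k k"
    "Z = four_block_mat Z1 (0\<^sub>m r k) Z3 Z4"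
proof -
  obtain Z1 Z2 Z3 Z4 where sb: "split_block Z r r = (Z1, Z2, Z3, Z4)"
    by (cases "split_block Z r r") auto
  have dZ: "dim_row Z = r + k" "dim_col Z = r + k"
    using Z by auto
  note zb = split_block[OF sb dZ]
  have blocks: "four_block_mat (X1 * Z1 + 0\<^sub>m r k * Z3) (X1 * Z2 + 0\<^sub>m r k * Z4)
      (X2 * Z1 + X4 * Z3) (X2 * Z2 + X4 * Z4) = four_block_mat (1\<^sub>m r) (0\<^sub>m r k) (0\<^sub>m k r) (1\<^sub>m k)"
    using Z zb X inv by (subst mult_four_block_mat[symmetric, of _ r r _ k _ k]) auto
  have carriers: "X1 * Z1 + 0\<^sub>m r k * Z3 \<in> carrier_mat r r" "X1 * Z2 + 0\<^sub>m r k * Z4 \<in> carrier_mat r k"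
    "X2 * Z1 + X4 * Z3 \<in> carrier_mat k r" "X2 * Z2 + X4 * Z4 \<in> carrier_mat k k"
    using X Z zb by (auto simp: carrier_matD)
  note four_block_mat_inject[OF carriers one_carrier_mat zero_carrier_mat zero_carrier_mat
      one_carrier_mat blocks]
  then have X1_Z1: "X1 * Z1 = 1\<^sub>m r" and X1_Z2: "X1 * Z2 = 0\<^sub>m r k"
    using X zb by simp_all
  have "Z2 = (Z1 * X1) * Z2"
    using mat_mult_left_right_inverse[OF X(1) _ X1_Z1] Z zb by simp
  also have "\<dots> = 0\<^sub>m r k"
    using X Z zb X1_Z2 by simp
  finally show ?thesis
    using that zb Z by simp
qed

lemma projector_mult_lower_block_triangular:
  fixes Y1 :: "'a :: ring_1 mat"
  assumes "Y1 \<in> carrier_mat r r" "Y3 \<in> carrier_mat k r" "Y4 \<in> carrier_mat k k"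
  defines "Pr \<equiv> four_block_mat (1\<^sub>m r) (0\<^sub>m r k) (0\<^sub>m k r) (0\<^sub>m k k)"
  shows "Pr * four_block_mat Y1 (0\<^sub>m r k) Y3 Y4 * (1\<^sub>m (r + k) - Pr) = 0\<^sub>m (r + k) (r + k)"
proof -
  have "1\<^sub>m (r + k) - Pr = four_block_mat (0\<^sub>m r r) (0\<^sub>m r k) (0\<^sub>m k r) (1\<^sub>m k)"
    unfolding Pr_def by (intro eq_matI) auto
  moreover have "Pr * four_block_mat Y1 (0\<^sub>m r k) Y3 Y4 = four_block_mat Y1 (0\<^sub>m r k) (0\<^sub>m k r) (0\<^sub>m k k)"
    unfolding Pr_def using assms by (subst mult_four_block_mat[of _ r r _ k _ k]) auto
  ultimately show ?thesis
    using assms by (simp add: mult_four_block_mat[of _ r r _ k _ k _ _ r _ k])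
qed

lemma unitary_conj_lower_block_triangular:
  fixes U :: "complex mat"
  assumes U: "unitary_mat U m" and r: "r \<le> m"
    and Y: "Y1 \<in> carrier_mat r r" "Y3 \<in> carrier_mat (m - r) r" "Y4 \<in> carrier_mat (m - r) (m - r)"
  defines "P \<equiv> U * four_block_mat (1\<^sub>m r) (0\<^sub>m r (m - r)) (0\<^sub>m (m - r) r) (0\<^sub>m (m - r) (m - r)) * mat_adjoint U"
  shows "P * (U * four_block_mat Y1 (0\<^sub>m r (m - r)) Y3 Y4 * mat_adjoint U) * (1\<^sub>m m - P) = 0\<^sub>m m m"
proof -
  define Pr where "Pr = four_block_mat (1\<^sub>m r) (0\<^sub>m r (m - r)) (0\<^sub>m (m - r) r) (0\<^sub>m (m - r) (m - r) :: complex mat)"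
  define Y where "Y = four_block_mat Y1 (0\<^sub>m r (m - r)) Y3 Y4"
  note u = unitary_matD[OF U]
  have d: "dim_row U = m" "dim_col U = m" "dim_row Pr = m" "dim_col Pr = m" "dim_row Y = m" "dim_col Y = m"
    using u(1) Y r unfolding Pr_def Y_def by auto
  have "1\<^sub>m m - P = U * (1\<^sub>m m - Pr) * mat_adjoint U"
    unfolding P_def Pr_def[symmetric] using d u(2)
    by (simp add: mult_minus_distrib_mat_dim minus_mult_distrib_mat_dim)
  then have "P * (U * Y * mat_adjoint U) * (1\<^sub>m m - P) = U * (Pr * Y * (1\<^sub>m m - Pr)) * mat_adjoint U"
    unfolding P_def Pr_def[symmetric] using d u(4) by (simp add: assoc_mult_mat_dim)
  also have "Pr * Y * (1\<^sub>m m - Pr) = 0\<^sub>m m m"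
    using projector_mult_lower_block_triangular[OF Y] r unfolding Pr_def Y_def by simp
  finally show ?thesis
    unfolding Y_def using d by simp
qed

lemma unitary_conj_lower_block_triangular_inverse:
  fixes U :: "complex mat"
  assumes U: "unitary_mat U m" and r: "r \<le> m"
    and X: "X1 \<in> carrier_mat r r" "X2 \<in> carrier_mat (m - r) r" "X4 \<in> carrier_mat (m - r) (m - r)"
    and Xi: "Xi \<in> carrier_mat m m"
    and inv: "U * four_block_mat X1 (0\<^sub>m r (m - r)) X2 X4 * mat_adjoint U * Xi = 1\<^sub>m m"
  obtains Z1 Z3 Z4 where "Z1 \<in> carrier_mat r r" "Z3 \<in> carrier_mat (m - r) r"
    "Z4 \<in> carrier_mat (m - r) (m - r)" "Xi = U * four_block_mat Z1 (0\<^sub>m r (m - r)) Z3 Z4 * mat_adjoint U"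
proof -
  define X' where "X' = four_block_mat X1 (0\<^sub>m r (m - r)) X2 X4"
  define Z where "Z = mat_adjoint U * Xi * U"
  note u = unitary_matD[OF U]
  have d: "dim_row U = m" "dim_col U = m" "dim_row X' = m" "dim_col X' = m" "dim_row Xi = m" "dim_col Xi = m"
    using u(1) X Xi r unfolding X'_def by auto
  have "X' * Z = mat_adjoint U * (U * X' * mat_adjoint U * Xi) * U"
    unfolding Z_def using d u(4) by (simp add: assoc_mult_mat_dim)
  then have "X' * Z = 1\<^sub>m (r + (m - r))"
    unfolding X'_def inv using u(3) d r by simp
  moreover have "Z \<in> carrier_mat (r + (m - r)) (r + (m - r))"
    unfolding Z_def using d r by (intro carrier_matI) simp_all
  moreover have "Xi = U * Z * mat_adjoint U"
    unfolding Z_def using d u(2) by (simp add: assoc_mult_mat_dim u(5))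
  ultimately show ?thesis
    using lower_block_triangular_right_inverse[OF X, of Z] that unfolding X'_def by metis
qed

lemma triangular_wrt_projector_unitary_conj:
  fixes U X Xi :: "complex mat"
  assumes U: "unitary_mat U m" and r: "r \<le> m"
    and X_blocks: "X1 \<in> carrier_mat r r" "X2 \<in> carrier_mat (m - r) r" "X4 \<in> carrier_mat (m - r) (m - r)"
    and X_eq: "X = U * four_block_mat X1 (0\<^sub>m r (m - r)) X2 X4 * mat_adjoint U"
    and X: "X \<in> carrier_mat m m" "Xi \<in> carrier_mat m m" "X * Xi = 1\<^sub>m m"
  defines "P \<equiv> U * four_block_mat (1\<^sub>m r) (0\<^sub>m r (m - r)) (0\<^sub>m (m - r) r) (0\<^sub>m (m - r) (m - r)) * mat_adjoint U"
  shows "triangular_wrt_projector m P X Xi"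
proof -
  define Pr where "Pr = four_block_mat (1\<^sub>m r) (0\<^sub>m r (m - r)) (0\<^sub>m (m - r) r) (0\<^sub>m (m - r) (m - r) :: complex mat)"
  note u = unitary_matD[OF U]
  have d: "dim_row U = m" "dim_col U = m" "dim_row Pr = m" "dim_col Pr = m"
    using u(1) r unfolding Pr_def by auto
  have Pr_idem: "Pr * Pr = Pr"
    unfolding Pr_def by (simp add: mult_four_block_mat_corner[of _ r r])
  have "P * P = U * (Pr * Pr) * mat_adjoint U"
    unfolding P_def Pr_def[symmetric] using d u(4) by (simp add: assoc_mult_mat_dim)
  then have "P * P = P"
    unfolding Pr_idem P_def Pr_def[symmetric] .
  moreover have "mat_adjoint Pr = Pr"
    unfolding Pr_def by (subst mat_adjoint_four_block_mat) auto
  then have "mat_adjoint P = P"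
    unfolding P_def Pr_def[symmetric] using d by (simp add: mat_adjoint_mult assoc_mult_mat_dim)
  moreover have "P \<in> carrier_mat m m"
    unfolding P_def Pr_def[symmetric] using d by (intro carrier_matI) simp_all
  moreover have "P * X * (1\<^sub>m m - P) = 0\<^sub>m m m"
    unfolding X_eq P_def by (rule unitary_conj_lower_block_triangular[OF U r X_blocks])
  moreover obtain Z1 Z3 Z4 where "Z1 \<in> carrier_mat r r" "Z3 \<in> carrier_mat (m - r) r"
    "Z4 \<in> carrier_mat (m - r) (m - r)" "Xi = U * four_block_mat Z1 (0\<^sub>m r (m - r)) Z3 Z4 * mat_adjoint U"
    using unitary_conj_lower_block_triangular_inverse[OF U r X_blocks X(2)] X(3) X_eq by metis
  then have "P * Xi * (1\<^sub>m m - P) = 0\<^sub>m m m"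
    unfolding P_def using unitary_conj_lower_block_triangular[OF U r] by simp
  moreover have "Xi * X = 1\<^sub>m m"
    using mat_mult_left_right_inverse[OF X] .
  ultimately show ?thesis
    using X by unfold_locales
qed

lemma mp_inv_mult_left_lower_block_triangular:
  fixes N G U X :: "complex mat"
  assumes G: "penrose_inverse N G" and N: "N \<in> carrier_mat m n"
    and U: "unitary_mat U m" and r: "r \<le> m"
    and NG: "N * G = U * four_block_mat (1\<^sub>m r) (0\<^sub>m r (m - r)) (0\<^sub>m (m - r) r) (0\<^sub>m (m - r) (m - r)) * mat_adjoint U"
    and X_blocks: "X1 \<in> carrier_mat r r" "X2 \<in> carrier_mat (m - r) r" "X4 \<in> carrier_mat (m - r) (m - r)"
    and X_eq: "X = U * four_block_mat X1 (0\<^sub>m r (m - r)) X2 X4 * mat_adjoint U"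
    and X: "X \<in> carrier_mat m m" "invertible_mat X"
  shows "X * N * mp_inv (X * N) =
    (let E = 1\<^sub>m m - N * G; R = X * E * minv X * (E - 1\<^sub>m m) in
      (1\<^sub>m m + R) * (N * G) * minv (1\<^sub>m m + mat_adjoint R * R) * (1\<^sub>m m + mat_adjoint R))"
proof -
  interpret triangular_wrt_projector m "N * G" X "minv X"
    unfolding NG using minv_inverse[OF X]
    by (intro triangular_wrt_projector_unitary_conj[OF U r X_blocks X_eq X(1)]) auto
  have "mp_inv (X * N) = G * minv X * Q"
    by (intro mp_inv_eqI penrose_inverse_mult_left_projector[OF G N refl])
  then show ?thesis
    using penrose_inverse_mult_left_projector(2)[OF G N refl]
    unfolding Let_def Q_def S_def T_def R_def by simp
qed

lemma mp_inv_mult_right_upper_block_triangular: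
  fixes N G V Y :: "complex mat"
  assumes G: "penrose_inverse N G" and N: "N \<in> carrier_mat m n"
    and V: "unitary_mat V n" and r: "r \<le> n"
    and GN: "G * N = V * four_block_mat (1\<^sub>m r) (0\<^sub>m r (n - r)) (0\<^sub>m (n - r) r) (0\<^sub>m (n - r) (n - r)) * mat_adjoint V"
    and Y_blocks: "Y1 \<in> carrier_mat r r" "Y3 \<in> carrier_mat r (n - r)" "Y4 \<in> carrier_mat (n - r) (n - r)"
    and Y_eq: "Y = V * four_block_mat Y1 Y3 (0\<^sub>m (n - r) r) Y4 * mat_adjoint V"
    and Y: "Y \<in> carrier_mat n n" "invertible_mat Y"
  shows "mp_inv (N * Y) * (N * Y) =
    (let F = 1\<^sub>m n - G * N; L = (F - 1\<^sub>m n) * minv Y * F * Y in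
      (1\<^sub>m n + mat_adjoint L) * minv (1\<^sub>m n + L * mat_adjoint L) * (G * N) * (1\<^sub>m n + L))"
proof -
  note Yi = minv_inverse[OF Y]
  note v = unitary_matD[OF V]
  have d: "dim_row N = m" "dim_col N = n" "dim_row G = n" "dim_col G = m" "dim_row V = n" "dim_col V = n"
    "dim_row Y = n" "dim_col Y = n" "dim_row (minv Y) = n" "dim_col (minv Y) = n"
    using G N v(1) Y(1) Yi(1) unfolding penrose_inverse_def by auto
  have Y_adj_eq: "mat_adjoint Y = V * four_block_mat (mat_adjoint Y1) (0\<^sub>m r (n - r)) (mat_adjoint Y3)
      (mat_adjoint Y4) * mat_adjoint V"
    unfolding Y_eq using d Y_blocks r
    by (simp add: mat_adjoint_mult assoc_mult_mat_dim mat_adjoint_four_block_mat[of _ r r _ "n - r" _ "n - r"])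
  have "mat_adjoint Y * mat_adjoint (minv Y) = 1\<^sub>m n"
    using Yi(3) d by (simp flip: mat_adjoint_mult)
  moreover have "mat_adjoint Y1 \<in> carrier_mat r r" "mat_adjoint Y3 \<in> carrier_mat (n - r) r"
    "mat_adjoint Y4 \<in> carrier_mat (n - r) (n - r)" "mat_adjoint Y \<in> carrier_mat n n"
    "mat_adjoint (minv Y) \<in> carrier_mat n n"
    using Y_blocks Y(1) Yi(1) by simp_all
  ultimately interpret triangular_wrt_projector n "G * N" "mat_adjoint Y" "mat_adjoint (minv Y)"
    unfolding GN by (intro triangular_wrt_projector_unitary_conj[OF V r _ _ _ Y_adj_eq])
  have N_adj: "penrose_inverse (mat_adjoint N) (mat_adjoint G)" "mat_adjoint N \<in> carrier_mat n m"
    "mat_adjoint N * mat_adjoint G = G * N"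
    using penrose_inverse_adjoint[OF G] G N d unfolding penrose_inverse_def
    by (auto simp flip: mat_adjoint_mult)
  note pinv = penrose_inverse_mult_left_projector[OF N_adj]
  have NY: "mat_adjoint (mat_adjoint Y * mat_adjoint N) = N * Y"
    using d by (simp add: mat_adjoint_mult)
  have "mp_inv (N * Y) = mat_adjoint (mat_adjoint G * mat_adjoint (minv Y) * Q)"
    using mp_inv_eqI[OF penrose_inverse_adjoint[OF pinv(1)]] unfolding NY .
  then have "mp_inv (N * Y) * (N * Y) =
      mat_adjoint (mat_adjoint Y * mat_adjoint N * (mat_adjoint G * mat_adjoint (minv Y) * Q))"
    unfolding NY[symmetric] using d by (subst mat_adjoint_mult) simp_all
  then have "mp_inv (N * Y) * (N * Y) = Q"
    unfolding pinv(2) Q_hermitian .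
  moreover have "R = mat_adjoint ((1\<^sub>m n - G * N - 1\<^sub>m n) * minv Y * (1\<^sub>m n - G * N) * Y)"
    unfolding R_def using d P_hermitian by (simp add: mat_adjoint_mult mat_adjoint_minus assoc_mult_mat_dim)
  ultimately show ?thesis
    unfolding Let_def Q_alt S_def T_def by simp
qed

lemma (in vec_space) rank_le_nr:
  assumes A: "A \<in> carrier_mat n nc"
  shows "rank A \<le> n"
proof -
  obtain S where max: "maximal S (\<lambda>T. T \<subseteq> set (cols A) \<and> lin_indpt T)"
    using maximal_exists[of "\<lambda>T. T \<subseteq> set (cols A) \<and> lin_indpt T" "card (set (cols A))" "{}"]
    by (meson List.finite_set card_mono empty_iff empty_subsetI finite_lin_indpt2 rev_finite_subset)
  have "S \<subseteq> set (cols A)" "lin_indpt S" using max unfolding maximal_def by auto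
  moreover have "set (cols A) \<subseteq> carrier_vec n" using A cols_dim by blast
  ultimately have "card S \<le> dim" using li_le_dim(2)[OF fin_dim] by auto
  then show ?thesis using rank_card_indpt[OF A max] dim_is_n by simp
qed

lemma invertible_diagonal_mat:
  assumes A: "(A :: 'a :: field mat) \<in> carrier_mat n n" and "diagonal_mat A"
    and nonzero: "\<And>i. i < n \<Longrightarrow> A $$ (i, i) \<noteq> 0"
  shows "invertible_mat A"
proof (rule invertible_mat_if_det_nonzero[OF A])
  have "upper_triangular A"
    using assms(2) A unfolding diagonal_mat_def upper_triangular_def by auto
  then have "det A = prod_list (diag_mat A)"
    using det_upper_triangular A by blast
  moreover have "0 \<notin> set (diag_mat A)"
    using A nonzero unfolding diag_mat_def by auto
  ultimately show "det A \<noteq> 0"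
    by (simp add: prod_list_zero_iff)
qed

theorem corollary3p2:
  fixes m n r :: nat and N U V \<Sigma> X Y :: "complex mat"
  assumes N: "N \<in> carrier_mat m n"
    and rk: "vec_space.rank m N = r"
    and \<Sigma>: "\<Sigma> \<in> carrier_mat r r" "diagonal_mat \<Sigma>"
    and \<Sigma>pos: "\<forall>i<r. Im (\<Sigma> $$ (i,i)) = 0 \<and> Re (\<Sigma> $$ (i,i)) > 0"
    and U: "unitary_mat U m" and V: "unitary_mat V n"
    and svd: "N = U * four_block_mat \<Sigma> (0\<^sub>m r (n - r)) (0\<^sub>m (m - r) r) (0\<^sub>m (m - r) (n - r))
                  * mat_adjoint V"
    and X: "X \<in> carrier_mat m m" "invertible_mat X"
    and Y: "Y \<in> carrier_mat n n" "invertible_mat Y"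
  shows
   "((\<exists>X1 X2 X4. X1 \<in> carrier_mat r r \<and> X2 \<in> carrier_mat (m - r) r \<and>
        X4 \<in> carrier_mat (m - r) (m - r) \<and>
        X = U * four_block_mat X1 (0\<^sub>m r (m - r)) X2 X4 * mat_adjoint U) \<longrightarrow>
     (let M1 = X * N; E = 1\<^sub>m m - N * mp_inv N; R = X * E * minv X * (E - 1\<^sub>m m) in
        M1 * mp_inv M1 =
          (1\<^sub>m m + R) * (N * mp_inv N) * minv (1\<^sub>m m + mat_adjoint R * R) * (1\<^sub>m m + mat_adjoint R)))
    \<and>
    ((\<exists>Y1 Y3 Y4. Y1 \<in> carrier_mat r r \<and> Y3 \<in> carrier_mat r (n - r) \<and>
        Y4 \<in> carrier_mat (n - r) (n - r) \<and>
        Y = V * four_block_mat Y1 Y3 (0\<^sub>m (n - r) r) Y4 * mat_adjoint V) \<longrightarrow>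
     (let M2 = N * Y; F = 1\<^sub>m n - mp_inv N * N; L = (F - 1\<^sub>m n) * minv Y * F * Y in
        mp_inv M2 * M2 =
          (1\<^sub>m n + mat_adjoint L) * minv (1\<^sub>m n + L * mat_adjoint L) * (mp_inv N * N) * (1\<^sub>m n + L)))"
proof -
  have r: "r \<le> m" "r \<le> n"
    using vec_space.rank_le_nr[OF N] vec_space.rank_le_nc[OF N] rk by simp_all
  have "invertible_mat \<Sigma>"
    using \<Sigma>pos by (intro invertible_diagonal_mat[OF \<Sigma>]) (auto simp: complex_eq_iff)
  note svd_pinv = penrose_inverse_svd[OF U V r \<Sigma>(1) minv_inverse[OF \<Sigma>(1) this], folded svd]
  note G = svd_pinv(2,3)[folded mp_inv_eqI[OF svd_pinv(1)]]
  note pinv = svd_pinv(1)[folded mp_inv_eqI[OF svd_pinv(1)]]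
  show ?thesis
    using mp_inv_mult_left_lower_block_triangular[OF pinv N U r(1) G(1) _ _ _ _ X]
      mp_inv_mult_right_upper_block_triangular[OF pinv N V r(2) G(2) _ _ _ _ Y]
    unfolding Let_def by blast
qed

end
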